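(* Let $i\colon\mathcal{A}\to\mathcal{A}'$ and $j\colon\mathcal{B}\to\mathcal{B}'$ be inclusions of cofinal full additive subcategories, and let $F\colon\mathcal{A}\to\mathcal{B}$ and $F'\colon\mathcal{A}'\to\mathcal{B}'$ be functors of additive categories with $j\circ F=F'\circ i$. Then: (1) the inclusion $i$ is faithfully flat; (2) $F$ is flat (respectively faithfully flat) if and only if $F'$ is flat (respectively faithfully flat).
   Context: A full additive subcategory $\mathcal{A}\subseteq\mathcal{A}'$ is cofinal if for every object $A'$ of $\mathcal{A}'$ there exist an object $A$ of $\mathcal{A}$ and morphisms $A'\to A\to A'$ composing to $\mathrm{id}_{A'}$. A sequence $A_0\xrightarrow{f}A_1\xrightarrow{g}A_2$ in an additive category is exact (at $A_1$) if $g\circ f=0$ and every morphism $h\colon A\to A_1$ with $g\circ h=0$ factors as $h=f\circ\bar h$. A functor $F$ of additive categories is flat if it maps exact sequences to exact sequences, and faithfully flat if a sequence is exact if and only if its image under $F$ is exact. *)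

theory Defs
  imports Main
begin

text \<open>An additive category presented concretely: objects, typed hom-sets,
  composition (cmp g f = g after f), identities, and the abelian group
  structure (addm, zerom, negm) on each hom-set.\<close>

record ('o, 'm) addcat =
  Obj :: "'o set"
  Hom :: "'o \<Rightarrow> 'o \<Rightarrow> 'm set"
  cmp :: "'m \<Rightarrow> 'm \<Rightarrow> 'm"
  ident :: "'o \<Rightarrow> 'm"
  addm :: "'m \<Rightarrow> 'm \<Rightarrow> 'm"
  zerom :: "'o \<Rightarrow> 'o \<Rightarrow> 'm"
  negm :: "'m \<Rightarrow> 'm"

definition is_category :: "('o, 'm, 'x) addcat_scheme \<Rightarrow> bool" where
  "is_category C \<longleftrightarrow>
     (\<forall>a\<in>Obj C. ident C a \<in> Hom C a a) \<and>
     (\<forall>a\<in>Obj C. \<forall>b\<in>Obj C. \<forall>c\<in>Obj C. \<forall>f\<in>Hom C a b. \<forall>g\<in>Hom C b c.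
        cmp C g f \<in> Hom C a c) \<and>
     (\<forall>a\<in>Obj C. \<forall>b\<in>Obj C. \<forall>c\<in>Obj C. \<forall>d\<in>Obj C.
        \<forall>f\<in>Hom C a b. \<forall>g\<in>Hom C b c. \<forall>h\<in>Hom C c d.
        cmp C h (cmp C g f) = cmp C (cmp C h g) f) \<and>
     (\<forall>a\<in>Obj C. \<forall>b\<in>Obj C. \<forall>f\<in>Hom C a b.
        cmp C f (ident C a) = f \<and> cmp C (ident C b) f = f)"

definition is_preadditive :: "('o, 'm, 'x) addcat_scheme \<Rightarrow> bool" where
  "is_preadditive C \<longleftrightarrow> is_category C \<and>
     (\<forall>a\<in>Obj C. \<forall>b\<in>Obj C.
        zerom C a b \<in> Hom C a b \<and>
        (\<forall>f\<in>Hom C a b. \<forall>g\<in>Hom C a b. addm C f g \<in> Hom C a b) \<and>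
        (\<forall>f\<in>Hom C a b. negm C f \<in> Hom C a b) \<and>
        (\<forall>f\<in>Hom C a b. \<forall>g\<in>Hom C a b. \<forall>h\<in>Hom C a b.
           addm C (addm C f g) h = addm C f (addm C g h)) \<and>
        (\<forall>f\<in>Hom C a b. \<forall>g\<in>Hom C a b. addm C f g = addm C g f) \<and>
        (\<forall>f\<in>Hom C a b. addm C f (zerom C a b) = f) \<and>
        (\<forall>f\<in>Hom C a b. addm C f (negm C f) = zerom C a b)) \<and>
     (\<forall>a\<in>Obj C. \<forall>b\<in>Obj C. \<forall>c\<in>Obj C.
        \<forall>f\<in>Hom C a b. \<forall>f'\<in>Hom C a b. \<forall>g\<in>Hom C b c. \<forall>g'\<in>Hom C b c.
        cmp C (addm C g g') f = addm C (cmp C g f) (cmp C g' f) \<and>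
        cmp C g (addm C f f') = addm C (cmp C g f) (cmp C g f'))"

definition is_additive_category :: "('o, 'm, 'x) addcat_scheme \<Rightarrow> bool" where
  "is_additive_category C \<longleftrightarrow> is_preadditive C \<and>
     \<comment> \<open>zero object\<close>
     (\<exists>z\<in>Obj C. \<forall>a\<in>Obj C. (\<exists>!f. f \<in> Hom C z a) \<and> (\<exists>!f. f \<in> Hom C a z)) \<and>
     \<comment> \<open>binary biproducts\<close>
     (\<forall>a\<in>Obj C. \<forall>b\<in>Obj C. \<exists>c\<in>Obj C.
        \<exists>p1\<in>Hom C c a. \<exists>p2\<in>Hom C c b. \<exists>i1\<in>Hom C a c. \<exists>i2\<in>Hom C b c.
          cmp C p1 i1 = ident C a \<and> cmp C p2 i2 = ident C b \<and>
          cmp C p2 i1 = zerom C a b \<and> cmp C p1 i2 = zerom C b a \<and>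
          addm C (cmp C i1 p1) (cmp C i2 p2) = ident C c)"

definition additive_functor ::
  "('o, 'm, 'x) addcat_scheme \<Rightarrow> ('p, 'n, 'y) addcat_scheme \<Rightarrow>
   ('o \<Rightarrow> 'p) \<Rightarrow> ('m \<Rightarrow> 'n) \<Rightarrow> bool" where
  "additive_functor C D Fo Fm \<longleftrightarrow>
     is_additive_category C \<and> is_additive_category D \<and>
     (\<forall>a\<in>Obj C. Fo a \<in> Obj D) \<and>
     (\<forall>a\<in>Obj C. \<forall>b\<in>Obj C. \<forall>f\<in>Hom C a b. Fm f \<in> Hom D (Fo a) (Fo b)) \<and>
     (\<forall>a\<in>Obj C. Fm (ident C a) = ident D (Fo a)) \<and>
     (\<forall>a\<in>Obj C. \<forall>b\<in>Obj C. \<forall>c\<in>Obj C. \<forall>f\<in>Hom C a b. \<forall>g\<in>Hom C b c.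
        Fm (cmp C g f) = cmp D (Fm g) (Fm f)) \<and>
     (\<forall>a\<in>Obj C. \<forall>b\<in>Obj C. \<forall>f\<in>Hom C a b. \<forall>g\<in>Hom C a b.
        Fm (addm C f g) = addm D (Fm f) (Fm g))"

definition exact_at ::
  "('o, 'm, 'x) addcat_scheme \<Rightarrow> 'o \<Rightarrow> 'o \<Rightarrow> 'o \<Rightarrow> 'm \<Rightarrow> 'm \<Rightarrow> bool" where
  "exact_at C a0 a1 a2 f g \<longleftrightarrow>
     a0 \<in> Obj C \<and> a1 \<in> Obj C \<and> a2 \<in> Obj C \<and> f \<in> Hom C a0 a1 \<and> g \<in> Hom C a1 a2 \<and>
     cmp C g f = zerom C a0 a2 \<and>
     (\<forall>a\<in>Obj C. \<forall>h\<in>Hom C a a1. cmp C g h = zerom C a a2 \<longrightarrow>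
        (\<exists>h'\<in>Hom C a a0. h = cmp C f h'))"

definition flat ::
  "('o, 'm, 'x) addcat_scheme \<Rightarrow> ('p, 'n, 'y) addcat_scheme \<Rightarrow>
   ('o \<Rightarrow> 'p) \<Rightarrow> ('m \<Rightarrow> 'n) \<Rightarrow> bool" where
  "flat C D Fo Fm \<longleftrightarrow>
     (\<forall>a0 a1 a2 f g. exact_at C a0 a1 a2 f g \<longrightarrow>
        exact_at D (Fo a0) (Fo a1) (Fo a2) (Fm f) (Fm g))"

definition faithfully_flat ::
  "('o, 'm, 'x) addcat_scheme \<Rightarrow> ('p, 'n, 'y) addcat_scheme \<Rightarrow>
   ('o \<Rightarrow> 'p) \<Rightarrow> ('m \<Rightarrow> 'n) \<Rightarrow> bool" where
  "faithfully_flat C D Fo Fm \<longleftrightarrow>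
     (\<forall>a0\<in>Obj C. \<forall>a1\<in>Obj C. \<forall>a2\<in>Obj C. \<forall>f\<in>Hom C a0 a1. \<forall>g\<in>Hom C a1 a2.
        exact_at C a0 a1 a2 f g \<longleftrightarrow>
        exact_at D (Fo a0) (Fo a1) (Fo a2) (Fm f) (Fm g))"

definition full_additive_subcat ::
  "('o, 'm, 'x) addcat_scheme \<Rightarrow> ('o, 'm, 'y) addcat_scheme \<Rightarrow> bool" where
  "full_additive_subcat A A' \<longleftrightarrow>
     is_additive_category A \<and> is_additive_category A' \<and>
     Obj A \<subseteq> Obj A' \<and>
     (\<forall>a\<in>Obj A. \<forall>b\<in>Obj A. Hom A a b = Hom A' a b) \<and>
     (\<forall>a\<in>Obj A. ident A a = ident A' a) \<and>
     (\<forall>a\<in>Obj A. \<forall>b\<in>Obj A. \<forall>c\<in>Obj A. \<forall>f\<in>Hom A a b. \<forall>g\<in>Hom A b c.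
        cmp A g f = cmp A' g f) \<and>
     (\<forall>a\<in>Obj A. \<forall>b\<in>Obj A. zerom A a b = zerom A' a b \<and>
        (\<forall>f\<in>Hom A a b. negm A f = negm A' f \<and>
           (\<forall>g\<in>Hom A a b. addm A f g = addm A' f g)))"

definition cofinal ::
  "('o, 'm, 'x) addcat_scheme \<Rightarrow> ('o, 'm, 'y) addcat_scheme \<Rightarrow> bool" where
  "cofinal A A' \<longleftrightarrow>
     (\<forall>a'\<in>Obj A'. \<exists>a\<in>Obj A. \<exists>s\<in>Hom A' a' a. \<exists>r\<in>Hom A' a a'.
        cmp A' r s = ident A' a')"

end

theory Submission
  imports Defs
begin

text \<open>Every object of A' is a retract of an object of A. Exactness at the middle object only
  has to be tested against maps out of objects of A, since a map out of a retract of y factors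
  through y; this gives (1). For (2), a sequence a0 --f--> a1 --g--> a2 in A' is traded for a
  sequence in A whose exactness agrees with that of the original one after applying any additive
  functor. Choose retractions r_k s_k = 1 of the a_k onto objects b_k of A. Precomposing f with the
  split epimorphism r0 and postcomposing g with the split monomorphism s2 does not affect
  exactness, and the middle object is replaced by b1 through
    b0 (+) b1 --(s1 f r0, 1 - s1 r1)--> b1 --s2 g r1--> b2,
  where the component 1 - s1 r1 covers the part of b1 that r1 sends to zero. All identities used
  are equations between composites and sums of morphisms, so additive functors preserve them.\<close>

locale preadditive =
  fixes C :: "('o, 'm, 'x) addcat_scheme"
  assumes is_preadditive: "is_preadditive C"
begin

lemma ident_hom [simp]: "a \<in> Obj C \<Longrightarrow> ident C a \<in> Hom C a a"
  using is_preadditive unfolding is_preadditive_def is_category_def by simp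

lemma cmp_hom [simp]:
  "\<lbrakk>f \<in> Hom C a b; g \<in> Hom C b c; a \<in> Obj C; b \<in> Obj C; c \<in> Obj C\<rbrakk> \<Longrightarrow> cmp C g f \<in> Hom C a c"
  using is_preadditive unfolding is_preadditive_def is_category_def by auto

(* The simplifier discharges a premise f \<in> Hom C a ?b only by an assumption, so below typing
   facts for composite morphisms are stated explicitly and passed to simp (no_asm_simp), which
   keeps them from being simplified away. *)

lemma zerom_hom [simp]:
  "\<lbrakk>a \<in> Obj C; b \<in> Obj C\<rbrakk> \<Longrightarrow> zerom C a b \<in> Hom C a b"
  using is_preadditive unfolding is_preadditive_def by simp

lemma addm_hom [simp]:
  "\<lbrakk>f \<in> Hom C a b; g \<in> Hom C a b; a \<in> Obj C; b \<in> Obj C\<rbrakk> \<Longrightarrow> addm C f g \<in> Hom C a b"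
  using is_preadditive unfolding is_preadditive_def by simp

lemma negm_hom [simp]:
  "\<lbrakk>f \<in> Hom C a b; a \<in> Obj C; b \<in> Obj C\<rbrakk>
   \<Longrightarrow> negm C f \<in> Hom C a b"
  using is_preadditive unfolding is_preadditive_def by simp

lemma cmp_assoc:
  "\<lbrakk>f \<in> Hom C a b; g \<in> Hom C b c; h \<in> Hom C c d; a \<in> Obj C; b \<in> Obj C; c \<in> Obj C; d \<in> Obj C\<rbrakk>
   \<Longrightarrow> cmp C (cmp C h g) f = cmp C h (cmp C g f)"
  using is_preadditive unfolding is_preadditive_def is_category_def by simp

lemma cmp_ident_left [simp]:
  "\<lbrakk>f \<in> Hom C a b; a \<in> Obj C; b \<in> Obj C\<rbrakk>
   \<Longrightarrow> cmp C (ident C b) f = f"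
  using is_preadditive unfolding is_preadditive_def is_category_def by simp

lemma cmp_ident_right [simp]:
  "\<lbrakk>f \<in> Hom C a b; a \<in> Obj C; b \<in> Obj C\<rbrakk>
   \<Longrightarrow> cmp C f (ident C a) = f"
  using is_preadditive unfolding is_preadditive_def is_category_def by simp

lemma addm_assoc:
  "\<lbrakk>f \<in> Hom C a b; g \<in> Hom C a b; h \<in> Hom C a b; a \<in> Obj C; b \<in> Obj C\<rbrakk>
   \<Longrightarrow> addm C (addm C f g) h = addm C f (addm C g h)"
  using is_preadditive unfolding is_preadditive_def by blast

lemma addm_commute:
  "\<lbrakk>f \<in> Hom C a b; g \<in> Hom C a b; a \<in> Obj C; b \<in> Obj C\<rbrakk>
   \<Longrightarrow> addm C f g = addm C g f"
  using is_preadditive unfolding is_preadditive_def by blast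

lemma addm_zerom_right [simp]:
  "\<lbrakk>f \<in> Hom C a b; a \<in> Obj C; b \<in> Obj C\<rbrakk>
   \<Longrightarrow> addm C f (zerom C a b) = f"
  using is_preadditive unfolding is_preadditive_def by simp

lemma addm_zerom_left [simp]:
  "\<lbrakk>f \<in> Hom C a b; a \<in> Obj C; b \<in> Obj C\<rbrakk>
   \<Longrightarrow> addm C (zerom C a b) f = f"
  using addm_commute[of "zerom C a b" a b f] by simp

lemma addm_negm_right [simp]:
  "\<lbrakk>f \<in> Hom C a b; a \<in> Obj C; b \<in> Obj C\<rbrakk>
   \<Longrightarrow> addm C f (negm C f) = zerom C a b"
  using is_preadditive unfolding is_preadditive_def by simp

lemma addm_negm_left [simp]:
  "\<lbrakk>f \<in> Hom C a b; a \<in> Obj C; b \<in> Obj C\<rbrakk>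
   \<Longrightarrow> addm C (negm C f) f = zerom C a b"
  using addm_commute[of "negm C f" a b f] by simp

lemma cmp_addm_left:
  "\<lbrakk>f \<in> Hom C a b; g \<in> Hom C b c; g' \<in> Hom C b c; a \<in> Obj C; b \<in> Obj C; c \<in> Obj C\<rbrakk>
   \<Longrightarrow> cmp C (addm C g g') f = addm C (cmp C g f) (cmp C g' f)"
  using is_preadditive unfolding is_preadditive_def by simp

lemma cmp_addm_right:
  "\<lbrakk>f \<in> Hom C a b; f' \<in> Hom C a b; g \<in> Hom C b c; a \<in> Obj C; b \<in> Obj C; c \<in> Obj C\<rbrakk>
   \<Longrightarrow> cmp C g (addm C f f') = addm C (cmp C g f) (cmp C g f')"
  using is_preadditive unfolding is_preadditive_def by simp

lemma addm_idem_eq_zerom: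
  assumes "f \<in> Hom C a b" "a \<in> Obj C" "b \<in> Obj C" "addm C f f = f"
  shows "f = zerom C a b"
proof -
  have "zerom C a b = addm C (addm C f f) (negm C f)" using assms by simp
  also have "\<dots> = f" using assms(1-3) by (simp add: addm_assoc)
  finally show ?thesis ..
qed

lemma cmp_zerom_left [simp]:
  assumes "f \<in> Hom C a b" "a \<in> Obj C" "b \<in> Obj C" "c \<in> Obj C"
  shows "cmp C (zerom C b c) f = zerom C a c"
  using assms cmp_addm_left[of f a b "zerom C b c" c "zerom C b c"]
    cmp_hom[of f a b "zerom C b c" c]
  by (intro addm_idem_eq_zerom) simp_all

lemma cmp_zerom_right [simp]:
  assumes "g \<in> Hom C b c" "a \<in> Obj C" "b \<in> Obj C" "c \<in> Obj C"
  shows "cmp C g (zerom C a b) = zerom C a c"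
  using assms cmp_addm_right[of "zerom C a b" a b "zerom C a b" g c]
    cmp_hom[of "zerom C a b" a b g c]
  by (intro addm_idem_eq_zerom) simp_all

end

section \<open>Exactness and retracts\<close>

lemma exact_atI:
  assumes "a0 \<in> Obj C" "a1 \<in> Obj C" "a2 \<in> Obj C" "f \<in> Hom C a0 a1" "g \<in> Hom C a1 a2"
    and "cmp C g f = zerom C a0 a2"
    and "\<And>y h. \<lbrakk>y \<in> Obj C; h \<in> Hom C y a1; cmp C g h = zerom C y a2\<rbrakk> \<Longrightarrow> \<exists>k\<in>Hom C y a0. h = cmp C f k"
  shows "exact_at C a0 a1 a2 f g"
  using assms unfolding exact_at_def by blast

lemma exact_atD:
  assumes "exact_at C a0 a1 a2 f g"
  shows "a0 \<in> Obj C" "a1 \<in> Obj C" "a2 \<in> Obj C" "f \<in> Hom C a0 a1" "g \<in> Hom C a1 a2"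
    and "cmp C g f = zerom C a0 a2"
  using assms unfolding exact_at_def by blast+

lemma exact_at_factor:
  assumes "exact_at C a0 a1 a2 f g" "y \<in> Obj C" "h \<in> Hom C y a1" "cmp C g h = zerom C y a2"
  obtains k where "k \<in> Hom C y a0" "h = cmp C f k"
  using assms unfolding exact_at_def by blast

definition is_retract :: "('o, 'm, 'x) addcat_scheme \<Rightarrow> 'o \<Rightarrow> 'o \<Rightarrow> 'm \<Rightarrow> 'm \<Rightarrow> bool" where
  "is_retract C a b s r \<longleftrightarrow>
     a \<in> Obj C \<and> b \<in> Obj C \<and> s \<in> Hom C a b \<and> r \<in> Hom C b a \<and> cmp C r s = ident C a"

lemma is_retractD:
  assumes "is_retract C a b s r"
  shows "a \<in> Obj C" "b \<in> Obj C" "s \<in> Hom C a b" "r \<in> Hom C b a" "cmp C r s = ident C a"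
  using assms unfolding is_retract_def by blast+

context preadditive
begin

lemma section_cmp_eq_zerom_iff:
  assumes "is_retract C a b s r" "h \<in> Hom C y a" "y \<in> Obj C"
  shows "cmp C s h = zerom C y b \<longleftrightarrow> h = zerom C y a"
proof
  note types = is_retractD[OF assms(1)] assms(2,3)
  assume sh: "cmp C s h = zerom C y b"
  have "h = cmp C (cmp C r s) h"
    using types by simp
  also have "\<dots> = zerom C y a"
    using types(1-4,6,7) sh by (simp add: cmp_assoc)
  finally show "h = zerom C y a" .
qed (use assms is_retractD[OF assms(1)] in simp)

lemma cmp_retraction_eq_zerom_iff:
  assumes "is_retract C a b s r" "h \<in> Hom C a y" "y \<in> Obj C"
  shows "cmp C h r = zerom C b y \<longleftrightarrow> h = zerom C a y"
proof
  note types = is_retractD[OF assms(1)] assms(2,3)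
  assume hr: "cmp C h r = zerom C b y"
  have "h = cmp C h (cmp C r s)"
    using types by simp
  also have "\<dots> = zerom C a y"
    using types(1-4,6,7) hr by (simp flip: cmp_assoc)
  finally show "h = zerom C a y" .
qed (use assms is_retractD[OF assms(1)] in simp)

lemma exact_at_precompose_retraction:
  assumes r: "is_retract C a0 b s r"
    and "a1 \<in> Obj C" "a2 \<in> Obj C" "f \<in> Hom C a0 a1" "g \<in> Hom C a1 a2"
  shows "exact_at C b a1 a2 (cmp C f r) g \<longleftrightarrow> exact_at C a0 a1 a2 f g"
proof -
  note types = is_retractD[OF r] assms(2-5)
  have zero: "cmp C g (cmp C f r) = zerom C b a2 \<longleftrightarrow> cmp C g f = zerom C a0 a2"
    using types cmp_retraction_eq_zerom_iff[OF r, of "cmp C g f"] by (simp flip: cmp_assoc)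
  have factor: "(\<exists>k\<in>Hom C y b. h = cmp C (cmp C f r) k) \<longleftrightarrow> (\<exists>k\<in>Hom C y a0. h = cmp C f k)"
    if "y \<in> Obj C" for y h
  proof
    assume "\<exists>k\<in>Hom C y b. h = cmp C (cmp C f r) k"
    then obtain k where "k \<in> Hom C y b" "h = cmp C (cmp C f r) k" ..
    then show "\<exists>k\<in>Hom C y a0. h = cmp C f k"
      using that types by (intro bexI[of _ "cmp C r k"]) (simp_all add: cmp_assoc)
  next
    assume "\<exists>k\<in>Hom C y a0. h = cmp C f k"
    then obtain k where "k \<in> Hom C y a0" "h = cmp C f k" ..
    moreover have "cmp C s k \<in> Hom C y b"
      using that types \<open>k \<in> Hom C y a0\<close> by simp
    then have "cmp C (cmp C f r) (cmp C s k) = cmp C f (cmp C (cmp C r s) k)"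
      using that types(1-4,6-) \<open>k \<in> Hom C y a0\<close> by (simp (no_asm_simp) add: cmp_assoc)
    ultimately show "\<exists>k\<in>Hom C y b. h = cmp C (cmp C f r) k"
      using that types by (intro bexI[of _ "cmp C s k"]) simp_all
  qed
  show ?thesis
    using types zero factor unfolding exact_at_def by simp
qed

lemma exact_at_postcompose_section:
  assumes s: "is_retract C a2 b s r"
    and "a0 \<in> Obj C" "a1 \<in> Obj C" "f \<in> Hom C a0 a1" "g \<in> Hom C a1 a2"
  shows "exact_at C a0 a1 b f (cmp C s g) \<longleftrightarrow> exact_at C a0 a1 a2 f g"
proof -
  note types = is_retractD[OF s] assms(2-5)
  have zero: "cmp C (cmp C s g) h = zerom C y b \<longleftrightarrow> cmp C g h = zerom C y a2"
    if "y \<in> Obj C" "h \<in> Hom C y a1" for y h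
    using that types section_cmp_eq_zerom_iff[OF s, of "cmp C g h" y] by (simp add: cmp_assoc)
  show ?thesis
    using types zero unfolding exact_at_def by simp
qed

lemma exact_at_middle_retract:
  assumes s: "is_retract C a1 b s r" and i: "is_retract C a0 c i p"
    and "a2 \<in> Obj C" "f \<in> Hom C a0 a1" "g \<in> Hom C a1 a2" "\<phi> \<in> Hom C c b" "j \<in> Hom C b c"
    and \<phi>i: "cmp C \<phi> i = cmp C s f"
    and \<phi>j: "addm C (cmp C s r) (cmp C \<phi> j) = ident C b"
    and r\<phi>: "cmp C r \<phi> = cmp C f p"
  shows "exact_at C c b a2 \<phi> (cmp C g r) \<longleftrightarrow> exact_at C a0 a1 a2 f g"
proof -
  note types = is_retractD[OF s] is_retractD[OF i] assms(3-7)
  have "cmp C (cmp C g r) \<phi> = cmp C (cmp C g f) p"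
    using types r\<phi> by (simp add: cmp_assoc)
  then have zero: "cmp C (cmp C g r) \<phi> = zerom C c a2 \<longleftrightarrow> cmp C g f = zerom C a0 a2"
    using types cmp_retraction_eq_zerom_iff[OF i, of "cmp C g f"] by simp
  show ?thesis
  proof
    assume exact: "exact_at C c b a2 \<phi> (cmp C g r)"
    show "exact_at C a0 a1 a2 f g"
    proof (rule exact_atI)
      fix y h assume h: "y \<in> Obj C" "h \<in> Hom C y a1" "cmp C g h = zerom C y a2"
      have sh: "cmp C s h \<in> Hom C y b"
        using h types by simp
      have "cmp C (cmp C g r) (cmp C s h) = cmp C g (cmp C (cmp C r s) h)"
        using h sh types(1-4,6-) by (simp (no_asm_simp) add: cmp_assoc)
      then have "cmp C (cmp C g r) (cmp C s h) = zerom C y a2"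
        using h types by simp
      then obtain k where k: "k \<in> Hom C y c" "cmp C s h = cmp C \<phi> k"
        by (rule exact_at_factor[OF exact h(1) sh])
      have "h = cmp C r (cmp C s h)"
        using h types by (simp flip: cmp_assoc)
      also have "\<dots> = cmp C f (cmp C p k)"
        using h k types r\<phi> by (simp flip: cmp_assoc)
      finally show "\<exists>k\<in>Hom C y a0. h = cmp C f k"
        using h k types by auto
    qed (use types zero exact_atD[OF exact] in simp_all)
  next
    assume exact: "exact_at C a0 a1 a2 f g"
    show "exact_at C c b a2 \<phi> (cmp C g r)"
    proof (rule exact_atI)
      fix y h assume h: "y \<in> Obj C" "h \<in> Hom C y b" "cmp C (cmp C g r) h = zerom C y a2"
      then have "cmp C g (cmp C r h) = zerom C y a2"
        using types by (simp flip: cmp_assoc)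
      moreover have "cmp C r h \<in> Hom C y a1"
        using h types by simp
      ultimately obtain k where k: "k \<in> Hom C y a0" "cmp C r h = cmp C f k"
        using exact_at_factor[OF exact h(1)] by blast
      have homs: "cmp C s r \<in> Hom C b b" "cmp C \<phi> j \<in> Hom C b b"
        "cmp C i k \<in> Hom C y c" "cmp C j h \<in> Hom C y c"
        using h k types by simp_all
      have "h = cmp C (addm C (cmp C s r) (cmp C \<phi> j)) h"
        using h types \<phi>j by simp
      also have "\<dots> = addm C (cmp C s (cmp C r h)) (cmp C \<phi> (cmp C j h))"
        using h homs types by (simp (no_asm_simp) add: cmp_addm_left cmp_assoc)
      also have "\<dots> = cmp C \<phi> (addm C (cmp C i k) (cmp C j h))"
        using h k homs types \<phi>i by (simp (no_asm_simp) add: cmp_addm_right flip: cmp_assoc)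
      finally show "\<exists>k\<in>Hom C y c. h = cmp C \<phi> k"
        using h k types by auto
    qed (use types zero exact_atD[OF exact] in simp_all)
  qed
qed

lemma exact_at_via_retracts:
  assumes r0: "is_retract C a0 b0 s0 r0" and r1: "is_retract C a1 b1 s1 r1"
    and r2: "is_retract C a2 b2 s2 r2" and i: "is_retract C b0 c i p"
    and "f \<in> Hom C a0 a1" "g \<in> Hom C a1 a2" "\<phi> \<in> Hom C c b1" "j \<in> Hom C b1 c"
    and "cmp C \<phi> i = cmp C s1 (cmp C f r0)"
    and "addm C (cmp C s1 r1) (cmp C \<phi> j) = ident C b1"
    and "cmp C r1 \<phi> = cmp C (cmp C f r0) p"
  shows "exact_at C c b1 b2 \<phi> (cmp C (cmp C s2 g) r1) \<longleftrightarrow> exact_at C a0 a1 a2 f g"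
proof -
  note types = is_retractD(1-4)[OF r0] is_retractD(1-4)[OF r1] is_retractD(1-4)[OF r2] assms(5,6)
  have "exact_at C c b1 b2 \<phi> (cmp C (cmp C s2 g) r1)
      \<longleftrightarrow> exact_at C b0 a1 b2 (cmp C f r0) (cmp C s2 g)"
    by (rule exact_at_middle_retract[OF r1 i]) (use types assms(7-) in simp_all)
  also have "\<dots> \<longleftrightarrow> exact_at C b0 a1 a2 (cmp C f r0) g"
    by (rule exact_at_postcompose_section[OF r2]) (use types in simp_all)
  also have "\<dots> \<longleftrightarrow> exact_at C a0 a1 a2 f g"
    by (rule exact_at_precompose_retraction[OF r0]) (use types in simp_all)
  finally show ?thesis .
qed

lemma biproduct_map_with_complement:
  assumes i: "is_retract C a c i p" and j: "is_retract C b c j q"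
    and qi: "cmp C q i = zerom C a b" and pj: "cmp C p j = zerom C b a"
    and s: "is_retract C x b s r" and m: "m \<in> Hom C a b"
  defines "\<phi> \<equiv> addm C (cmp C m p) (cmp C (addm C (negm C (cmp C s r)) (ident C b)) q)"
  shows "\<phi> \<in> Hom C c b"
    and "cmp C \<phi> i = m"
    and "addm C (cmp C s r) (cmp C \<phi> j) = ident C b"
    and "cmp C r \<phi> = cmp C (cmp C r m) p"
proof -
  note types = is_retractD(1-4)[OF i] is_retractD(1-4)[OF j] is_retractD(1-4)[OF s] m
  define u where "u = addm C (negm C (cmp C s r)) (ident C b)"
  have homs: "cmp C s r \<in> Hom C b b" "u \<in> Hom C b b" "cmp C m p \<in> Hom C c b" "cmp C u q \<in> Hom C c b"
    "negm C (cmp C s r) \<in> Hom C b b"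
    using types by (simp_all add: u_def)
  have "cmp C r u = addm C (cmp C r (negm C (cmp C s r))) (cmp C r (cmp C s r))"
    using types homs is_retractD(5)[OF s]
    by (simp (no_asm_simp) add: u_def cmp_addm_right flip: cmp_assoc)
  also have "\<dots> = cmp C r (addm C (negm C (cmp C s r)) (cmp C s r))"
    by (rule cmp_addm_right[of _ b b _ r x, symmetric]) (use types homs in simp_all)
  also have "\<dots> = zerom C b x"
    using types homs by (simp (no_asm_simp))
  finally have ru: "cmp C r u = zerom C b x" .
  show "\<phi> \<in> Hom C c b"
    using types homs by (simp (no_asm_simp) add: \<phi>_def u_def[symmetric])
  have "addm C (cmp C s r) u = ident C b"
    using types homs by (simp (no_asm_simp) add: u_def flip: addm_assoc)
  moreover have "cmp C \<phi> j = u"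
    using types homs is_retractD(5)[OF j] pj
    by (simp (no_asm_simp) add: \<phi>_def u_def[symmetric] cmp_addm_left cmp_assoc)
  ultimately show "addm C (cmp C s r) (cmp C \<phi> j) = ident C b"
    by simp
  show "cmp C \<phi> i = m"
    using types homs is_retractD(5)[OF i] qi
    by (simp (no_asm_simp) add: \<phi>_def u_def[symmetric] cmp_addm_left cmp_assoc)
  show "cmp C r \<phi> = cmp C (cmp C r m) p"
    using types homs ru
    by (simp (no_asm_simp) add: \<phi>_def u_def[symmetric] cmp_addm_right flip: cmp_assoc)
qed

end

lemma additive_functor_preadditive:
  assumes "additive_functor C D G0 G1"
  shows "preadditive C" "preadditive D"
  using assms unfolding additive_functor_def is_additive_category_def preadditive_def by blast+

lemma additive_functor_Obj:
  "\<lbrakk>additive_functor C D G0 G1; a \<in> Obj C\<rbrakk> \<Longrightarrow> G0 a \<in> Obj D"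
  unfolding additive_functor_def by blast

lemma additive_functor_Hom:
  "\<lbrakk>additive_functor C D G0 G1; f \<in> Hom C a b; a \<in> Obj C; b \<in> Obj C\<rbrakk> \<Longrightarrow> G1 f \<in> Hom D (G0 a) (G0 b)"
  unfolding additive_functor_def by blast

lemma additive_functor_cmp:
  "\<lbrakk>additive_functor C D G0 G1; f \<in> Hom C a b; g \<in> Hom C b c; a \<in> Obj C; b \<in> Obj C; c \<in> Obj C\<rbrakk>
   \<Longrightarrow> G1 (cmp C g f) = cmp D (G1 g) (G1 f)"
  unfolding additive_functor_def by blast

lemma additive_functor_ident:
  "\<lbrakk>additive_functor C D G0 G1; a \<in> Obj C\<rbrakk> \<Longrightarrow> G1 (ident C a) = ident D (G0 a)"
  unfolding additive_functor_def by blast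

lemma additive_functor_addm:
  "\<lbrakk>additive_functor C D G0 G1; f \<in> Hom C a b; g \<in> Hom C a b; a \<in> Obj C; b \<in> Obj C\<rbrakk>
   \<Longrightarrow> G1 (addm C f g) = addm D (G1 f) (G1 g)"
  unfolding additive_functor_def by blast

lemma additive_functor_is_retract:
  assumes G: "additive_functor C D G0 G1" and "is_retract C a b s r"
  shows "is_retract D (G0 a) (G0 b) (G1 s) (G1 r)"
  using assms is_retractD[OF assms(2)]
  by (simp add: is_retract_def additive_functor_Obj additive_functor_Hom
      flip: additive_functor_cmp[OF G] additive_functor_ident[OF G])

lemma additive_functor_id:
  "is_additive_category C \<Longrightarrow> additive_functor C C (\<lambda>a. a) (\<lambda>f. f)"
  unfolding additive_functor_def by simp

lemma additive_functor_exact_at_via_retracts: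
  assumes G: "additive_functor C D G0 G1"
    and r0: "is_retract C a0 b0 s0 r0" and r1: "is_retract C a1 b1 s1 r1"
    and r2: "is_retract C a2 b2 s2 r2" and i: "is_retract C b0 c i p"
    and f: "f \<in> Hom C a0 a1" and g: "g \<in> Hom C a1 a2"
    and \<phi>: "\<phi> \<in> Hom C c b1" and j: "j \<in> Hom C b1 c"
    and \<phi>i: "cmp C \<phi> i = cmp C s1 (cmp C f r0)"
    and \<phi>j: "addm C (cmp C s1 r1) (cmp C \<phi> j) = ident C b1"
    and r\<phi>: "cmp C r1 \<phi> = cmp C (cmp C f r0) p"
  shows "exact_at D (G0 c) (G0 b1) (G0 b2) (G1 \<phi>) (G1 (cmp C (cmp C s2 g) r1))
     \<longleftrightarrow> exact_at D (G0 a0) (G0 a1) (G0 a2) (G1 f) (G1 g)"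
proof -
  interpret C: preadditive C by (rule additive_functor_preadditive[OF G])
  interpret D: preadditive D by (rule additive_functor_preadditive[OF G])
  note types = is_retractD(1-4)[OF r0] is_retractD(1-4)[OF r1] is_retractD(1-4)[OF r2]
    is_retractD(1-4)[OF i] f g \<phi> j
  have homs: "cmp C f r0 \<in> Hom C b0 a1" "cmp C s2 g \<in> Hom C a1 b2"
    "cmp C s1 r1 \<in> Hom C b1 b1" "cmp C \<phi> j \<in> Hom C b1 b1"
    using types by simp_all
  note G_cmp = additive_functor_cmp[OF G] and G_Hom = additive_functor_Hom[OF G]
    and G_Obj = additive_functor_Obj[OF G]
  have G\<psi>: "G1 (cmp C (cmp C s2 g) r1) = cmp D (cmp D (G1 s2) (G1 g)) (G1 r1)"
    using types homs by (simp (no_asm_simp) add: G_cmp)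
  show ?thesis
    unfolding G\<psi>
  proof (rule D.exact_at_via_retracts)
    show "cmp D (G1 \<phi>) (G1 i) = cmp D (G1 s1) (cmp D (G1 f) (G1 r0))"
      using arg_cong[OF \<phi>i, of G1] types homs by (simp add: G_cmp)
    show "addm D (cmp D (G1 s1) (G1 r1)) (cmp D (G1 \<phi>) (G1 j)) = ident D (G0 b1)"
      using arg_cong[OF \<phi>j, of G1] types homs
      by (simp add: G_cmp additive_functor_addm[OF G] additive_functor_ident[OF G])
    show "cmp D (G1 r1) (G1 \<phi>) = cmp D (cmp D (G1 f) (G1 r0)) (G1 p)"
      using arg_cong[OF r\<phi>, of G1] types homs by (simp add: G_cmp)
  qed (use types G_Hom G_Obj additive_functor_is_retract[OF G] r0 r1 r2 i in auto)
qed

section \<open>Cofinal full subcategories\<close>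

lemma full_additive_subcat_preadditive:
  "full_additive_subcat A A' \<Longrightarrow> preadditive A'"
  unfolding full_additive_subcat_def is_additive_category_def preadditive_def by blast

lemma full_additive_subcat_Obj:
  "\<lbrakk>full_additive_subcat A A'; a \<in> Obj A\<rbrakk> \<Longrightarrow> a \<in> Obj A'"
  unfolding full_additive_subcat_def by blast

lemma full_additive_subcat_Hom:
  "\<lbrakk>full_additive_subcat A A'; a \<in> Obj A; b \<in> Obj A\<rbrakk> \<Longrightarrow> Hom A a b = Hom A' a b"
  unfolding full_additive_subcat_def by blast

lemma full_additive_subcat_cmp:
  "\<lbrakk>full_additive_subcat A A'; a \<in> Obj A; b \<in> Obj A; c \<in> Obj A; f \<in> Hom A a b; g \<in> Hom A b c\<rbrakk>
   \<Longrightarrow> cmp A g f = cmp A' g f"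
  unfolding full_additive_subcat_def by blast

lemma full_additive_subcat_ident:
  "\<lbrakk>full_additive_subcat A A'; a \<in> Obj A\<rbrakk> \<Longrightarrow> ident A a = ident A' a"
  unfolding full_additive_subcat_def by blast

lemma full_additive_subcat_zerom:
  "\<lbrakk>full_additive_subcat A A'; a \<in> Obj A; b \<in> Obj A\<rbrakk> \<Longrightarrow> zerom A a b = zerom A' a b"
  unfolding full_additive_subcat_def by blast

lemma cofinal_retractE:
  assumes "full_additive_subcat A A'" "cofinal A A'" "a' \<in> Obj A'"
  obtains a s r where "a \<in> Obj A" "is_retract A' a' a s r"
proof -
  obtain a s r where "a \<in> Obj A" "s \<in> Hom A' a' a" "r \<in> Hom A' a a'" "cmp A' r s = ident A' a'"
    using assms(2,3) unfolding cofinal_def by blast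
  moreover from assms(1) \<open>a \<in> Obj A\<close> have "a \<in> Obj A'"
    by (rule full_additive_subcat_Obj)
  ultimately show thesis
    using that[of a s r] assms(3) unfolding is_retract_def by blast
qed

lemma full_additive_subcat_biproduct:
  assumes AA': "full_additive_subcat A A'" and a: "a \<in> Obj A" and b: "b \<in> Obj A"
  obtains c i p j q where "c \<in> Obj A" "is_retract A' a c i p" "is_retract A' b c j q"
    "cmp A' q i = zerom A' a b" "cmp A' p j = zerom A' b a"
proof -
  from AA' have "is_additive_category A"
    unfolding full_additive_subcat_def by blast
  then obtain c p q i j where c: "c \<in> Obj A"
    and homs: "p \<in> Hom A c a" "q \<in> Hom A c b" "i \<in> Hom A a c" "j \<in> Hom A b c"
    and eqs: "cmp A p i = ident A a" "cmp A q j = ident A b"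
      "cmp A q i = zerom A a b" "cmp A p j = zerom A b a"
    using a b unfolding is_additive_category_def by blast
  show thesis
  proof
    show "c \<in> Obj A" by (fact c)
    show "is_retract A' a c i p" "is_retract A' b c j q"
      using AA' a b c homs eqs
      by (simp_all add: is_retract_def full_additive_subcat_Obj full_additive_subcat_Hom
          full_additive_subcat_ident flip: full_additive_subcat_cmp)
    show "cmp A' q i = zerom A' a b" "cmp A' p j = zerom A' b a"
      using AA' a b c homs eqs
      by (simp_all add: full_additive_subcat_cmp full_additive_subcat_zerom)
  qed
qed

lemma cofinal_exact_at_iff:
  assumes AA': "full_additive_subcat A A'" and cof: "cofinal A A'"
    and objs: "a0 \<in> Obj A" "a1 \<in> Obj A" "a2 \<in> Obj A" and homs: "f \<in> Hom A a0 a1" "g \<in> Hom A a1 a2"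
  shows "exact_at A' a0 a1 a2 f g \<longleftrightarrow> exact_at A a0 a1 a2 f g"
proof -
  interpret A': preadditive A' by (rule full_additive_subcat_preadditive[OF AA'])
  note sub = full_additive_subcat_Obj[OF AA'] full_additive_subcat_Hom[OF AA']
    full_additive_subcat_cmp[OF AA'] full_additive_subcat_zerom[OF AA']
  have objs': "a0 \<in> Obj A'" "a1 \<in> Obj A'" "a2 \<in> Obj A'"
    and homs': "f \<in> Hom A' a0 a1" "g \<in> Hom A' a1 a2"
    using objs homs sub by auto
  have zero: "cmp A' g f = zerom A' a0 a2 \<longleftrightarrow> cmp A g f = zerom A a0 a2"
    using objs homs sub by simp
  show ?thesis
  proof
    assume exact': "exact_at A' a0 a1 a2 f g"
    show "exact_at A a0 a1 a2 f g"
    proof (rule exact_atI)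
      fix y h assume y: "y \<in> Obj A" and "h \<in> Hom A y a1" "cmp A g h = zerom A y a2"
      then obtain k where "k \<in> Hom A' y a0" "h = cmp A' f k"
        using exact_at_factor[OF exact', of y h] objs homs sub by auto
      then show "\<exists>k\<in>Hom A y a0. h = cmp A f k"
        using y objs homs sub by auto
    qed (use objs homs zero exact_atD[OF exact'] in simp_all)
  next
    assume exact: "exact_at A a0 a1 a2 f g"
    show "exact_at A' a0 a1 a2 f g"
    proof (rule exact_atI)
      fix y' h
      assume y': "y' \<in> Obj A'" and h: "h \<in> Hom A' y' a1" and gh: "cmp A' g h = zerom A' y' a2"
      obtain y s r where y: "y \<in> Obj A" and r: "is_retract A' y' y s r"
        using cofinal_retractE[OF AA' cof y'] .
      note types = is_retractD[OF r]
      have hr: "cmp A' h r \<in> Hom A y a1"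
        using h types objs objs' y sub by simp
      have "cmp A' g (cmp A' h r) = zerom A' y a2"
        using h gh types objs' homs' by (simp flip: A'.cmp_assoc)
      then have "cmp A g (cmp A' h r) = zerom A y a2"
        using hr y objs homs sub by simp
      then obtain k where k: "k \<in> Hom A y a0" "cmp A' h r = cmp A f k"
        using exact_at_factor[OF exact y hr] by blast
      have "h = cmp A' (cmp A' h r) s"
        using h types objs' by (simp add: A'.cmp_assoc)
      also have "\<dots> = cmp A' f (cmp A' k s)"
        using k y types objs homs sub by (simp add: A'.cmp_assoc)
      finally show "\<exists>k\<in>Hom A' y' a0. h = cmp A' f k"
        using k y types objs objs' sub by auto
    qed (use objs' homs' zero exact_atD[OF exact] in simp_all)
  qed
qed

lemma cofinal_exact_at_reduction:
  assumes AA': "full_additive_subcat A A'" and cof: "cofinal A A'"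
    and G: "additive_functor A' D G0 G1"
    and objs: "a0 \<in> Obj A'" "a1 \<in> Obj A'" "a2 \<in> Obj A'"
    and f: "f \<in> Hom A' a0 a1" and g: "g \<in> Hom A' a1 a2"
  obtains c b1 b2 \<phi> \<psi> where "c \<in> Obj A" "b1 \<in> Obj A" "b2 \<in> Obj A" "\<phi> \<in> Hom A c b1" "\<psi> \<in> Hom A b1 b2"
    and "exact_at A' c b1 b2 \<phi> \<psi> \<longleftrightarrow> exact_at A' a0 a1 a2 f g"
    and "exact_at D (G0 c) (G0 b1) (G0 b2) (G1 \<phi>) (G1 \<psi>)
      \<longleftrightarrow> exact_at D (G0 a0) (G0 a1) (G0 a2) (G1 f) (G1 g)"
proof -
  interpret A': preadditive A' by (rule full_additive_subcat_preadditive[OF AA'])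
  obtain b0 s0 r0 where b0: "b0 \<in> Obj A" and r0: "is_retract A' a0 b0 s0 r0"
    using cofinal_retractE[OF AA' cof objs(1)] .
  obtain b1 s1 r1 where b1: "b1 \<in> Obj A" and r1: "is_retract A' a1 b1 s1 r1"
    using cofinal_retractE[OF AA' cof objs(2)] .
  obtain b2 s2 r2 where b2: "b2 \<in> Obj A" and r2: "is_retract A' a2 b2 s2 r2"
    using cofinal_retractE[OF AA' cof objs(3)] .
  obtain c i p j q where c: "c \<in> Obj A"
    and i: "is_retract A' b0 c i p" and j: "is_retract A' b1 c j q"
    and qi: "cmp A' q i = zerom A' b0 b1" and pj: "cmp A' p j = zerom A' b1 b0"
    using full_additive_subcat_biproduct[OF AA' b0 b1] .
  note types = is_retractD(1-4)[OF r0] is_retractD(1-4)[OF r1] is_retractD(1-4)[OF r2]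
    is_retractD(1-4)[OF i] is_retractD(1-4)[OF j] f g
  define \<phi> where "\<phi> = addm A' (cmp A' (cmp A' s1 (cmp A' f r0)) p)
    (cmp A' (addm A' (negm A' (cmp A' s1 r1)) (ident A' b1)) q)"
  define \<psi> where "\<psi> = cmp A' (cmp A' s2 g) r1"
  have fr0: "cmp A' f r0 \<in> Hom A' b0 a1"
    using types by simp
  then have m: "cmp A' s1 (cmp A' f r0) \<in> Hom A' b0 b1"
    using types by (simp (no_asm_simp))
  note \<phi>_eqs = A'.biproduct_map_with_complement[OF i j qi pj r1 m, folded \<phi>_def]
  have r1_s1: "cmp A' r1 (cmp A' s1 (cmp A' f r0)) = cmp A' f r0"
    using types fr0 is_retractD(5)[OF r1]
    by (simp (no_asm_simp) flip: A'.cmp_assoc[of "cmp A' f r0" b0 a1 s1 b1 r1 a1])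
  note reduction = additive_functor_exact_at_via_retracts[OF _ r0 r1 r2 i f g \<phi>_eqs(1)
      is_retractD(3)[OF j] \<phi>_eqs(2,3) \<phi>_eqs(4)[unfolded r1_s1], folded \<psi>_def]
  show thesis
  proof (rule that)
    show "\<phi> \<in> Hom A c b1" "\<psi> \<in> Hom A b1 b2"
      using AA' c b1 b2 \<phi>_eqs(1) types by (simp_all add: full_additive_subcat_Hom \<psi>_def)
    have "additive_functor A' A' (\<lambda>a. a) (\<lambda>f. f)"
      using AA' unfolding full_additive_subcat_def by (simp add: additive_functor_id)
    from reduction[OF this]
    show "exact_at A' c b1 b2 \<phi> \<psi> \<longleftrightarrow> exact_at A' a0 a1 a2 f g" .
    from reduction[OF G]
    show "exact_at D (G0 c) (G0 b1) (G0 b2) (G1 \<phi>) (G1 \<psi>)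
      \<longleftrightarrow> exact_at D (G0 a0) (G0 a1) (G0 a2) (G1 f) (G1 g)" .
  qed (fact c b1 b2)+
qed

lemma faithfully_flat_inclusion:
  assumes "full_additive_subcat A A'" "cofinal A A'"
  shows "faithfully_flat A A' (\<lambda>a. a) (\<lambda>f. f)"
  unfolding faithfully_flat_def using cofinal_exact_at_iff[OF assms] by simp

locale cofinal_square =
  fixes A :: "('o, 'm, 'a) addcat_scheme" and A' :: "('o, 'm, 'b) addcat_scheme"
    and B :: "('p, 'n, 'c) addcat_scheme" and B' :: "('p, 'n, 'd) addcat_scheme"
    and Fo :: "'o \<Rightarrow> 'p" and Fm :: "'m \<Rightarrow> 'n" and F'o :: "'o \<Rightarrow> 'p" and F'm :: "'m \<Rightarrow> 'n"
  assumes subcat_A: "full_additive_subcat A A'" and cofinal_A: "cofinal A A'"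
    and subcat_B: "full_additive_subcat B B'" and cofinal_B: "cofinal B B'"
    and functor_F: "additive_functor A B Fo Fm" and functor_F': "additive_functor A' B' F'o F'm"
    and F'_on_objects: "\<forall>a\<in>Obj A. F'o a = Fo a"
    and F'_on_morphisms: "\<forall>a\<in>Obj A. \<forall>b\<in>Obj A. \<forall>f\<in>Hom A a b. F'm f = Fm f"
begin

lemma exact_at_image_iff:
  assumes "a0 \<in> Obj A" "a1 \<in> Obj A" "a2 \<in> Obj A" "f \<in> Hom A a0 a1" "g \<in> Hom A a1 a2"
  shows "exact_at B' (F'o a0) (F'o a1) (F'o a2) (F'm f) (F'm g)
    \<longleftrightarrow> exact_at B (Fo a0) (Fo a1) (Fo a2) (Fm f) (Fm g)"
  using assms F'_on_objects F'_on_morphisms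
    cofinal_exact_at_iff[OF subcat_B cofinal_B, of "Fo a0" "Fo a1" "Fo a2" "Fm f" "Fm g"]
  by (simp add: additive_functor_Obj[OF functor_F] additive_functor_Hom[OF functor_F])

lemma flat_iff: "flat A' B' F'o F'm \<longleftrightarrow> flat A B Fo Fm"
proof
  assume flat': "flat A' B' F'o F'm"
  show "flat A B Fo Fm"
    unfolding flat_def
  proof (intro allI impI)
    fix a0 a1 a2 f g assume exact: "exact_at A a0 a1 a2 f g"
    note seq = exact_atD(1-5)[OF exact]
    have "exact_at A' a0 a1 a2 f g"
      using exact cofinal_exact_at_iff[OF subcat_A cofinal_A seq] by simp
    then have "exact_at B' (F'o a0) (F'o a1) (F'o a2) (F'm f) (F'm g)"
      using flat' unfolding flat_def by blast
    then show "exact_at B (Fo a0) (Fo a1) (Fo a2) (Fm f) (Fm g)"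
      using exact_at_image_iff[OF seq] by simp
  qed
next
  assume flat: "flat A B Fo Fm"
  show "flat A' B' F'o F'm"
    unfolding flat_def
  proof (intro allI impI)
    fix a0 a1 a2 f g assume exact': "exact_at A' a0 a1 a2 f g"
    obtain c b1 b2 \<phi> \<psi>
      where seq: "c \<in> Obj A" "b1 \<in> Obj A" "b2 \<in> Obj A" "\<phi> \<in> Hom A c b1" "\<psi> \<in> Hom A b1 b2"
      and iff_A': "exact_at A' c b1 b2 \<phi> \<psi> \<longleftrightarrow> exact_at A' a0 a1 a2 f g"
      and iff_B': "exact_at B' (F'o c) (F'o b1) (F'o b2) (F'm \<phi>) (F'm \<psi>)
        \<longleftrightarrow> exact_at B' (F'o a0) (F'o a1) (F'o a2) (F'm f) (F'm g)"
      using cofinal_exact_at_reduction[OF subcat_A cofinal_A functor_F' exact_atD(1-5)[OF exact']] .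
    have "exact_at A c b1 b2 \<phi> \<psi>"
      using exact' iff_A' cofinal_exact_at_iff[OF subcat_A cofinal_A seq] by simp
    then have "exact_at B (Fo c) (Fo b1) (Fo b2) (Fm \<phi>) (Fm \<psi>)"
      using flat unfolding flat_def by blast
    then show "exact_at B' (F'o a0) (F'o a1) (F'o a2) (F'm f) (F'm g)"
      using iff_B' exact_at_image_iff[OF seq] by simp
  qed
qed

lemma faithfully_flat_iff:
  "faithfully_flat A' B' F'o F'm \<longleftrightarrow> faithfully_flat A B Fo Fm"
proof
  assume ff': "faithfully_flat A' B' F'o F'm"
  show "faithfully_flat A B Fo Fm"
    unfolding faithfully_flat_def
  proof (intro ballI)
    fix a0 a1 a2 f g
    assume seq: "a0 \<in> Obj A" "a1 \<in> Obj A" "a2 \<in> Obj A" "f \<in> Hom A a0 a1" "g \<in> Hom A a1 a2"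
    then have "exact_at A' a0 a1 a2 f g \<longleftrightarrow> exact_at B' (F'o a0) (F'o a1) (F'o a2) (F'm f) (F'm g)"
      using ff' subcat_A unfolding faithfully_flat_def
      by (simp add: full_additive_subcat_Obj full_additive_subcat_Hom)
    then show "exact_at A a0 a1 a2 f g \<longleftrightarrow> exact_at B (Fo a0) (Fo a1) (Fo a2) (Fm f) (Fm g)"
      using cofinal_exact_at_iff[OF subcat_A cofinal_A seq] exact_at_image_iff[OF seq] by simp
  qed
next
  assume ff: "faithfully_flat A B Fo Fm"
  show "faithfully_flat A' B' F'o F'm"
    unfolding faithfully_flat_def
  proof (intro ballI)
    fix a0 a1 a2 f g
    assume seq': "a0 \<in> Obj A'" "a1 \<in> Obj A'" "a2 \<in> Obj A'" "f \<in> Hom A' a0 a1" "g \<in> Hom A' a1 a2"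
    obtain c b1 b2 \<phi> \<psi>
      where seq: "c \<in> Obj A" "b1 \<in> Obj A" "b2 \<in> Obj A" "\<phi> \<in> Hom A c b1" "\<psi> \<in> Hom A b1 b2"
      and iff_A': "exact_at A' c b1 b2 \<phi> \<psi> \<longleftrightarrow> exact_at A' a0 a1 a2 f g"
      and iff_B': "exact_at B' (F'o c) (F'o b1) (F'o b2) (F'm \<phi>) (F'm \<psi>)
        \<longleftrightarrow> exact_at B' (F'o a0) (F'o a1) (F'o a2) (F'm f) (F'm g)"
      using cofinal_exact_at_reduction[OF subcat_A cofinal_A functor_F' seq'] .
    have "exact_at A c b1 b2 \<phi> \<psi> \<longleftrightarrow> exact_at B (Fo c) (Fo b1) (Fo b2) (Fm \<phi>) (Fm \<psi>)"
      using ff seq unfolding faithfully_flat_def by blast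
    then show "exact_at A' a0 a1 a2 f g \<longleftrightarrow> exact_at B' (F'o a0) (F'o a1) (F'o a2) (F'm f) (F'm g)"
      using iff_A' iff_B' cofinal_exact_at_iff[OF subcat_A cofinal_A seq] exact_at_image_iff[OF seq]
      by simp
  qed
qed

end

theorem mainTheorem20:
  fixes A A' :: "('o, 'm) addcat" and B B' :: "('p, 'n) addcat"
    and Fo :: "'o \<Rightarrow> 'p" and Fm :: "'m \<Rightarrow> 'n"
    and F'o :: "'o \<Rightarrow> 'p" and F'm :: "'m \<Rightarrow> 'n"
  assumes "full_additive_subcat A A'" and "cofinal A A'"
    and "full_additive_subcat B B'" and "cofinal B B'"
    and "additive_functor A B Fo Fm"
    and "additive_functor A' B' F'o F'm"
    and "\<forall>a\<in>Obj A. F'o a = Fo a"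
    and "\<forall>a\<in>Obj A. \<forall>b\<in>Obj A. \<forall>f\<in>Hom A a b. F'm f = Fm f"
  shows "faithfully_flat A A' (\<lambda>x. x) (\<lambda>f. f)
    \<and> (flat A B Fo Fm \<longleftrightarrow> flat A' B' F'o F'm)
    \<and> (faithfully_flat A B Fo Fm \<longleftrightarrow> faithfully_flat A' B' F'o F'm)"
proof -
  interpret cofinal_square A A' B B' Fo Fm F'o F'm
    by unfold_locales (fact assms)+
  show ?thesis
    using faithfully_flat_inclusion[OF assms(1,2)] flat_iff faithfully_flat_iff by simp
qed

end
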